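(* Let $S$ be a functional PTS specification. For all terms $M,N,A,B$ of the $\lambda\Pi/S$ syntax such that the relevant inverse translations are defined: (1) if $M\longrightarrow_{\beta R}N$ then $\varphi(M)\longrightarrow_\beta^*\varphi(N)$; (2) if $A\longrightarrow_{\beta R}B$ then $\psi(A)\longrightarrow_\beta^*\psi(B)$.
   Context: $S=(\mathcal S,\mathcal A,\mathcal R)$ is a PTS specification (sorts, axioms $(s_1:s_2)$, rules $(s_1,s_2,s_3)$). Terms are $s\mid x\mid M\,N\mid\lambda x:A.M\mid\Pi x:A.B$ over constants $u_s,\varepsilon_s$ ($s\in\mathcal S$), $\dot s_1$ ($(s_1:s_2)\in\mathcal A$), $\dot\pi_{s_1s_2s_3}$ ($(s_1,s_2,s_3)\in\mathcal R$). $\longrightarrow_{\beta R}$ is the union of $\beta$-reduction and the contextual closure of the rewrite rules $\varepsilon_{s_2}\,\dot s_1\longrightarrow u_{s_1}$ for $(s_1:s_2)\in\mathcal A$ and $\varepsilon_{s_3}(\dot\pi_{s_1s_2s_3}\,A\,B)\longrightarrow\Pi x:\varepsilon_{s_1}A.\,\varepsilon_{s_2}(B\,x)$ for $(s_1,s_2,s_3)\in\mathcal R$ (for arbitrary terms $A,B$). Inverse translations (partial): $\varphi(\dot s)=s$, $\varphi(\dot\pi_{s_1s_2s_3})=\lambda\alpha:s_1.\lambda\beta:(\alpha\to s_2).\Pi x:\alpha.\beta\,x$, $\varphi(x)=x$, $\varphi(M\,N)=\varphi(M)\varphi(N)$, $\varphi(\lambda x:A.M)=\lambda x:\psi(A).\varphi(M)$;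 $\psi(u_s)=s$, $\psi(\varepsilon_sM)=\varphi(M)$, $\psi(\Pi x:A.B)=\Pi x:\psi(A).\psi(B)$. *)

theory Defs
  imports Main
begin

definition pts_spec :: "'s set \<Rightarrow> ('s \<times> 's) set \<Rightarrow> ('s \<times> 's \<times> 's) set \<Rightarrow> bool" where
  "pts_spec Srt Ax Rl \<longleftrightarrow>
     (\<forall>(s1, s2) \<in> Ax. s1 \<in> Srt \<and> s2 \<in> Srt) \<and>
     (\<forall>(s1, s2, s3) \<in> Rl. s1 \<in> Srt \<and> s2 \<in> Srt \<and> s3 \<in> Srt)"

definition functional_pts :: "'s set \<Rightarrow> ('s \<times> 's) set \<Rightarrow> ('s \<times> 's \<times> 's) set \<Rightarrow> bool" where
  "functional_pts Srt Ax Rl \<longleftrightarrow> pts_spec Srt Ax Rl \<and>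
     (\<forall>s1 s2 s2'. (s1, s2) \<in> Ax \<longrightarrow> (s1, s2') \<in> Ax \<longrightarrow> s2 = s2') \<and>
     (\<forall>s1 s2 s3 s3'. (s1, s2, s3) \<in> Rl \<longrightarrow> (s1, s2, s3') \<in> Rl \<longrightarrow> s3 = s3')"

datatype 's pterm =
    PSort 's
  | PVar nat
  | PApp "'s pterm" "'s pterm"
  | PLam "'s pterm" "'s pterm"   \<comment> \<open>PLam A M = \<lambda>x:A. M, x bound as index 0 in M\<close>
  | PPi "'s pterm" "'s pterm"

primrec plift :: "'s pterm \<Rightarrow> nat \<Rightarrow> 's pterm" where
  "plift (PSort s) k = PSort s"
| "plift (PVar i) k = (if i < k then PVar i else PVar (Suc i))"
| "plift (PApp M N) k = PApp (plift M k) (plift N k)"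
| "plift (PLam A M) k = PLam (plift A k) (plift M (Suc k))"
| "plift (PPi A B) k = PPi (plift A k) (plift B (Suc k))"

primrec psubst :: "'s pterm \<Rightarrow> nat \<Rightarrow> 's pterm \<Rightarrow> 's pterm" where
  "psubst (PSort s) k N = PSort s"
| "psubst (PVar i) k N = (if i < k then PVar i else if i = k then N else PVar (i - 1))"
| "psubst (PApp M1 M2) k N = PApp (psubst M1 k N) (psubst M2 k N)"
| "psubst (PLam A M) k N = PLam (psubst A k N) (psubst M (Suc k) (plift N 0))"
| "psubst (PPi A B) k N = PPi (psubst A k N) (psubst B (Suc k) (plift N 0))"

inductive pbeta :: "'s pterm \<Rightarrow> 's pterm \<Rightarrow> bool" where
  beta: "pbeta (PApp (PLam A M) N) (psubst M 0 N)"
| appL: "pbeta M M' \<Longrightarrow> pbeta (PApp M N) (PApp M' N)"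
| appR: "pbeta N N' \<Longrightarrow> pbeta (PApp M N) (PApp M N')"
| lamL: "pbeta A A' \<Longrightarrow> pbeta (PLam A M) (PLam A' M)"
| lamR: "pbeta M M' \<Longrightarrow> pbeta (PLam A M) (PLam A M')"
| piL: "pbeta A A' \<Longrightarrow> pbeta (PPi A B) (PPi A' B)"
| piR: "pbeta B B' \<Longrightarrow> pbeta (PPi A B) (PPi A B')"

abbreviation pbeta_star :: "'s pterm \<Rightarrow> 's pterm \<Rightarrow> bool" where
  "pbeta_star \<equiv> pbeta\<^sup>*\<^sup>*"

datatype lsort = LType | LKind

datatype 's lterm =
    LSort lsort
  | LVar nat
  | LApp "'s lterm" "'s lterm"
  | LLam "'s lterm" "'s lterm"
  | LPi "'s lterm" "'s lterm"
  | LU 's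
  | LEps 's
  | LDot 's
  | LPiC 's 's 's

fun lwf :: "'s set \<Rightarrow> ('s \<times> 's) set \<Rightarrow> ('s \<times> 's \<times> 's) set \<Rightarrow> 's lterm \<Rightarrow> bool" where
  "lwf Srt Ax Rl (LSort l) = True"
| "lwf Srt Ax Rl (LVar i) = True"
| "lwf Srt Ax Rl (LApp M N) = (lwf Srt Ax Rl M \<and> lwf Srt Ax Rl N)"
| "lwf Srt Ax Rl (LLam A M) = (lwf Srt Ax Rl A \<and> lwf Srt Ax Rl M)"
| "lwf Srt Ax Rl (LPi A B) = (lwf Srt Ax Rl A \<and> lwf Srt Ax Rl B)"
| "lwf Srt Ax Rl (LU s) = (s \<in> Srt)"
| "lwf Srt Ax Rl (LEps s) = (s \<in> Srt)"
| "lwf Srt Ax Rl (LDot s1) = (\<exists>s2. (s1, s2) \<in> Ax)"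
| "lwf Srt Ax Rl (LPiC s1 s2 s3) = ((s1, s2, s3) \<in> Rl)"

primrec llift :: "'s lterm \<Rightarrow> nat \<Rightarrow> 's lterm" where
  "llift (LSort l) k = LSort l"
| "llift (LVar i) k = (if i < k then LVar i else LVar (Suc i))"
| "llift (LApp M N) k = LApp (llift M k) (llift N k)"
| "llift (LLam A M) k = LLam (llift A k) (llift M (Suc k))"
| "llift (LPi A B) k = LPi (llift A k) (llift B (Suc k))"
| "llift (LU s) k = LU s"
| "llift (LEps s) k = LEps s"
| "llift (LDot s) k = LDot s"
| "llift (LPiC s1 s2 s3) k = LPiC s1 s2 s3"

primrec lsubst :: "'s lterm \<Rightarrow> nat \<Rightarrow> 's lterm \<Rightarrow> 's lterm" where
  "lsubst (LSort l) k N = LSort l"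
| "lsubst (LVar i) k N = (if i < k then LVar i else if i = k then N else LVar (i - 1))"
| "lsubst (LApp M1 M2) k N = LApp (lsubst M1 k N) (lsubst M2 k N)"
| "lsubst (LLam A M) k N = LLam (lsubst A k N) (lsubst M (Suc k) (llift N 0))"
| "lsubst (LPi A B) k N = LPi (lsubst A k N) (lsubst B (Suc k) (llift N 0))"
| "lsubst (LU s) k N = LU s"
| "lsubst (LEps s) k N = LEps s"
| "lsubst (LDot s) k N = LDot s"
| "lsubst (LPiC s1 s2 s3) k N = LPiC s1 s2 s3"

inductive lbetaR :: "('s \<times> 's) set \<Rightarrow> ('s \<times> 's \<times> 's) set \<Rightarrow> 's lterm \<Rightarrow> 's lterm \<Rightarrow> bool"
  for Ax Rl where
  beta: "lbetaR Ax Rl (LApp (LLam A M) N) (lsubst M 0 N)"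
| ax: "(s1, s2) \<in> Ax \<Longrightarrow> lbetaR Ax Rl (LApp (LEps s2) (LDot s1)) (LU s1)"
| rl: "(s1, s2, s3) \<in> Rl \<Longrightarrow>
       lbetaR Ax Rl (LApp (LEps s3) (LApp (LApp (LPiC s1 s2 s3) A) B))
         (LPi (LApp (LEps s1) A) (LApp (LEps s2) (LApp (llift B 0) (LVar 0))))"
| appL: "lbetaR Ax Rl M M' \<Longrightarrow> lbetaR Ax Rl (LApp M N) (LApp M' N)"
| appR: "lbetaR Ax Rl N N' \<Longrightarrow> lbetaR Ax Rl (LApp M N) (LApp M N')"
| lamL: "lbetaR Ax Rl A A' \<Longrightarrow> lbetaR Ax Rl (LLam A M) (LLam A' M)"
| lamR: "lbetaR Ax Rl M M' \<Longrightarrow> lbetaR Ax Rl (LLam A M) (LLam A M')"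
| piL: "lbetaR Ax Rl A A' \<Longrightarrow> lbetaR Ax Rl (LPi A B) (LPi A' B)"
| piR: "lbetaR Ax Rl B B' \<Longrightarrow> lbetaR Ax Rl (LPi A B) (LPi A B')"

fun phi :: "'s lterm \<Rightarrow> 's pterm option"
and psi :: "'s lterm \<Rightarrow> 's pterm option" where
  "phi (LDot s) = Some (PSort s)"
| "phi (LPiC s1 s2 s3) =
     Some (PLam (PSort s1) (PLam (PPi (PVar 0) (PSort s2)) (PPi (PVar 1) (PApp (PVar 1) (PVar 0)))))"
| "phi (LVar i) = Some (PVar i)"
| "phi (LApp M N) = (case (phi M, phi N) of (Some M', Some N') \<Rightarrow> Some (PApp M' N') | _ \<Rightarrow> None)"
| "phi (LLam A M) = (case (psi A, phi M) of (Some A', Some M') \<Rightarrow> Some (PLam A' M') | _ \<Rightarrow> None)"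
| "phi (LSort l) = None"
| "phi (LPi A B) = None"
| "phi (LU s) = None"
| "phi (LEps s) = None"
| "psi (LU s) = Some (PSort s)"
| "psi (LApp (LEps s) M) = phi M"
| "psi (LPi A B) = (case (psi A, psi B) of (Some A', Some B') \<Rightarrow> Some (PPi A' B') | _ \<Rightarrow> None)"
| "psi (LSort l) = None"
| "psi (LVar i) = None"
| "psi (LApp (LSort l) M) = None"
| "psi (LApp (LVar i) M) = None"
| "psi (LApp (LApp M1 M2) M) = None"
| "psi (LApp (LLam M1 M2) M) = None"
| "psi (LApp (LPi M1 M2) M) = None"
| "psi (LApp (LU s) M) = None"
| "psi (LApp (LDot s) M) = None"
| "psi (LApp (LPiC s1 s2 s3) M) = None"
| "psi (LLam A M) = None"
| "psi (LEps s) = None"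
| "psi (LDot s) = None"
| "psi (LPiC s1 s2 s3) = None"

end

theory Submission
  imports Defs
begin

text \<open>The translations \<open>phi\<close> and \<open>psi\<close> commute with lifting and substitution, so a
  \<open>\<beta>\<close>-step of \<open>\<lambda>\<Pi>/S\<close> is mapped to a \<open>\<beta>\<close>-step of the PTS. A rewrite step
  \<open>\<epsilon>\<^sub>s\<^sub>2 \<dot>s\<^sub>1 \<longrightarrow> u\<^sub>s\<^sub>1\<close> is mapped to an identity, and
  \<open>\<epsilon>\<^sub>s\<^sub>3 (\<dot>\<pi> A B) \<longrightarrow> \<Pi>x:\<epsilon>\<^sub>s\<^sub>1 A. \<epsilon>\<^sub>s\<^sub>2 (B x)\<close> to the two \<open>\<beta>\<close>-steps that
  unfold \<open>phi \<dot>\<pi>\<close> applied to \<open>phi A\<close> and \<open>phi B\<close>. Contextual steps are handled by the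
  congruence of \<open>\<beta>\<^sup>*\<close>; a step inside \<open>\<epsilon>\<^sub>s M\<close> can only happen in \<open>M\<close>, because \<open>\<epsilon>\<^sub>s\<close>
  is irreducible.\<close>

lemma phi_psi_llift:
  "phi (llift M k) = map_option (\<lambda>M'. plift M' k) (phi M) \<and>
   psi (llift M k) = map_option (\<lambda>M'. plift M' k) (psi M)"
proof (induction M arbitrary: k)
  case (LApp M1 M2)
  then show ?case
    by (cases M1) (auto split: option.splits)
qed (auto split: option.splits)

lemma phi_psi_lsubst:
  "(\<forall>k N N' M'. phi N = Some N' \<longrightarrow> phi M = Some M' \<longrightarrow>
      phi (lsubst M k N) = Some (psubst M' k N')) \<and>
   (\<forall>k N N' M'. phi N = Some N' \<longrightarrow> psi M = Some M' \<longrightarrow>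
      psi (lsubst M k N) = Some (psubst M' k N'))"
proof (induction M)
  case (LApp M1 M2)
  then show ?case
    by (cases M1) (auto split: option.splits simp: phi_psi_llift)
qed (auto split: option.splits simp: phi_psi_llift)

lemma psubst_plift_same: "psubst (plift M k) k N = M"
  by (induction M arbitrary: k N) auto

lemma lbetaR_LEps_irreducible: "\<not> lbetaR Ax Rl (LEps s) M"
  by (auto elim: lbetaR.cases)

lemma rtranclp_map:
  assumes "\<And>x y. r x y \<Longrightarrow> s (f x) (f y)" and "r\<^sup>*\<^sup>* x y"
  shows "s\<^sup>*\<^sup>* (f x) (f y)"
  using assms(2) by induction (auto intro: rtranclp.rtrancl_into_rtrancl assms(1))

lemma pbeta_star_PApp:
  "pbeta_star M M' \<Longrightarrow> pbeta_star N N' \<Longrightarrow> pbeta_star (PApp M N) (PApp M' N')"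
  using rtranclp_map[of pbeta pbeta "\<lambda>M. PApp M N"] rtranclp_map[of pbeta pbeta "PApp M'"]
  by (meson pbeta.appL pbeta.appR rtranclp_trans)

lemma pbeta_star_PLam:
  "pbeta_star A A' \<Longrightarrow> pbeta_star M M' \<Longrightarrow> pbeta_star (PLam A M) (PLam A' M')"
  using rtranclp_map[of pbeta pbeta "\<lambda>A. PLam A M"] rtranclp_map[of pbeta pbeta "PLam A'"]
  by (meson pbeta.lamL pbeta.lamR rtranclp_trans)

lemma pbeta_star_PPi:
  "pbeta_star A A' \<Longrightarrow> pbeta_star B B' \<Longrightarrow> pbeta_star (PPi A B) (PPi A' B')"
  using rtranclp_map[of pbeta pbeta "\<lambda>A. PPi A B"] rtranclp_map[of pbeta pbeta "PPi A'"]
  by (meson pbeta.piL pbeta.piR rtranclp_trans)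

lemma phi_LPiC_app_pbeta_star:
  assumes "phi (LPiC s1 s2 s3) = Some P"
  shows "pbeta_star (PApp (PApp P A) B) (PPi A (PApp (plift B 0) (PVar 0)))"
proof -
  have P: "P = PLam (PSort s1) (PLam (PPi (PVar 0) (PSort s2)) (PPi (PVar 1) (PApp (PVar 1) (PVar 0))))"
    using assms by simp
  let ?Q = "PLam (PPi A (PSort s2)) (PPi (plift A 0) (PApp (PVar 1) (PVar 0)))"
  have "pbeta (PApp P A) ?Q"
    unfolding P
    using pbeta.beta[of "PSort s1" "PLam (PPi (PVar 0) (PSort s2)) (PPi (PVar 1) (PApp (PVar 1) (PVar 0)))" A]
    by simp
  then have "pbeta (PApp (PApp P A) B) (PApp ?Q B)"
    by (rule pbeta.appL)
  moreover have "pbeta (PApp ?Q B) (PPi A (PApp (plift B 0) (PVar 0)))"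
    using pbeta.beta[of "PPi A (PSort s2)" "PPi (plift A 0) (PApp (PVar 1) (PVar 0))" B]
    by (simp add: psubst_plift_same)
  ultimately show ?thesis
    by (meson converse_rtranclp_into_rtranclp r_into_rtranclp)
qed

lemma lbetaR_phi_psi_pbeta_star:
  assumes "lbetaR Ax Rl M N"
  shows "(phi M = Some M' \<longrightarrow> phi N = Some N' \<longrightarrow> pbeta_star M' N') \<and>
         (psi M = Some M' \<longrightarrow> psi N = Some N' \<longrightarrow> pbeta_star M' N')"
  using assms
proof (induction arbitrary: M' N' rule: lbetaR.induct)
  case (beta A M N)
  show ?case
  proof (intro conjI impI)
    assume "phi (LApp (LLam A M) N) = Some M'" and N': "phi (lsubst M 0 N) = Some N'"
    then obtain A1 M1 N1 where "phi M = Some M1" "phi N = Some N1"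
      and M': "M' = PApp (PLam A1 M1) N1"
      by (auto split: option.splits)
    then have "N' = psubst M1 0 N1"
      using N' phi_psi_lsubst by (metis option.inject)
    then show "pbeta_star M' N'"
      unfolding M' by (auto intro: pbeta.beta)
  qed simp
next
  case (rl s1 s2 s3 A B)
  show ?case
  proof (intro conjI impI)
    assume "psi (LApp (LEps s3) (LApp (LApp (LPiC s1 s2 s3) A) B)) = Some M'"
      and "psi (LPi (LApp (LEps s1) A) (LApp (LEps s2) (LApp (llift B 0) (LVar 0)))) = Some N'"
    then obtain P A1 B1 where "phi (LPiC s1 s2 s3) = Some P"
      and "M' = PApp (PApp P A1) B1" and "N' = PPi A1 (PApp (plift B1 0) (PVar 0))"
      by (auto split: option.splits simp: phi_psi_llift)
    then show "pbeta_star M' N'"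
      by (simp add: phi_LPiC_app_pbeta_star)
  qed simp
next
  case (appL M M'' N)
  have "psi (LApp M N) = None"
    using appL.hyps by (cases M) (auto simp: lbetaR_LEps_irreducible)
  with appL.IH show ?case
    by (auto split: option.splits intro: pbeta_star_PApp)
next
  case (appR N N'' M)
  show ?case
  proof (intro conjI impI)
    assume "phi (LApp M N) = Some M'" and "phi (LApp M N'') = Some N'"
    with appR.IH show "pbeta_star M' N'"
      by (auto split: option.splits intro: pbeta_star_PApp)
  next
    assume psi_M': "psi (LApp M N) = Some M'" and "psi (LApp M N'') = Some N'"
    moreover obtain s where "M = LEps s"
      using psi_M' by (cases M) auto
    ultimately show "pbeta_star M' N'"
      using appR.IH by auto
  qed
next
  case (lamL A A' M)
  then show ?case by (auto split: option.splits intro: pbeta_star_PLam)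
next
  case (lamR M M'' A)
  then show ?case by (auto split: option.splits intro: pbeta_star_PLam)
next
  case (piL A A' B)
  then show ?case by (auto split: option.splits intro: pbeta_star_PPi)
next
  case (piR B B' A)
  then show ?case by (auto split: option.splits intro: pbeta_star_PPi)
qed simp

theorem lemma5p11:
  fixes Srt :: "'s set" and Ax :: "('s \<times> 's) set" and Rl :: "('s \<times> 's \<times> 's) set"
  assumes "functional_pts Srt Ax Rl"
  shows "(\<forall>M N M' N'. lwf Srt Ax Rl M \<longrightarrow> lwf Srt Ax Rl N \<longrightarrow> lbetaR Ax Rl M N \<longrightarrow>
            phi M = Some M' \<longrightarrow> phi N = Some N' \<longrightarrow> pbeta_star M' N')
       \<and> (\<forall>A B A' B'. lwf Srt Ax Rl A \<longrightarrow> lwf Srt Ax Rl B \<longrightarrow> lbetaR Ax Rl A B \<longrightarrow>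
            psi A = Some A' \<longrightarrow> psi B = Some B' \<longrightarrow> pbeta_star A' B')"
  using lbetaR_phi_psi_pbeta_star by blast

end
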